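(* Let $H=\sum_{i,j=1}^n\left(\tfrac12\mu_{ij}p_ip_j+\tfrac12\kappa_{ij}q_iq_j+\tfrac12\gamma_{ij}p_iq_j+\tfrac12\gamma_{ji}q_ip_j\right)$ with $\mu,\kappa$ real symmetric, $\gamma$ real, and Hermitian $p_i,q_i$ satisfying $[p_i,q_j]=-i\delta_{ij}$, $[p_i,p_j]=[q_i,q_j]=0$. If $H$ is Dirac diagonalizable, then its dynamic matrix $D=\Sigma_yM$ is physically diagonalizable.
   Context: $M=\begin{pmatrix}\mu&\gamma\\ \gamma^T&\kappa\end{pmatrix}$, $\Sigma_y=\begin{pmatrix}0&-iI_n\\ iI_n&0\end{pmatrix}$. $H$ is Dirac diagonalizable if there exist operators $d_1,\dots,d_n$, each a complex linear combination of the $p_i,q_i$, with $[d_i,d_j^\dagger]=\delta_{ij}$, $[d_i,d_j]=0$, and real $\omega_1,\dots,\omega_n,C$ with $H=\sum_i\omega_id_i^\dagger d_i+C$. A matrix is physically diagonalizable if it is diagonalizable over $\mathbb{C}$ and all its eigenvalues are real. *)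

theory Defs
  imports Complex_Main "Jordan_Normal_Form.Char_Poly"
begin

text \<open>Abstract complex unital *-algebra of operators: the ring 'a (with 1 \<noteq> 0),
  an embedding emb of complex scalars as central elements, and an involution st (adjoint).\<close>
definition star_algebra :: "(complex \<Rightarrow> 'a::ring_1) \<Rightarrow> ('a \<Rightarrow> 'a) \<Rightarrow> bool" where
  "star_algebra emb st \<longleftrightarrow>
     (\<forall>x y. emb (x + y) = emb x + emb y) \<and> (\<forall>x y. emb (x * y) = emb x * emb y) \<and> emb 1 = 1 \<and>
     (\<forall>c x. emb c * x = x * emb c) \<and>
     (\<forall>x y. st (x + y) = st x + st y) \<and> (\<forall>x y. st (x * y) = st y * st x) \<and>
     (\<forall>x. st (st x) = x) \<and> (\<forall>c. st (emb c) = emb (cnj c))"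

definition comm :: "'a::ring \<Rightarrow> 'a \<Rightarrow> 'a" where
  "comm x y = x * y - y * x"

definition ccr :: "nat \<Rightarrow> (complex \<Rightarrow> 'a::ring_1) \<Rightarrow> ('a \<Rightarrow> 'a) \<Rightarrow> (nat \<Rightarrow> 'a) \<Rightarrow> (nat \<Rightarrow> 'a) \<Rightarrow> bool" where
  "ccr n emb st p q \<longleftrightarrow>
     (\<forall>i<n. st (p i) = p i \<and> st (q i) = q i) \<and>
     (\<forall>i<n. \<forall>j<n. comm (p i) (q j) = emb (- \<i> * (if i = j then 1 else 0)) \<and>
                   comm (p i) (p j) = 0 \<and> comm (q i) (q j) = 0)"

definition hamiltonian :: "nat \<Rightarrow> (complex \<Rightarrow> 'a::ring_1) \<Rightarrow> (nat \<Rightarrow> 'a) \<Rightarrow> (nat \<Rightarrow> 'a)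
    \<Rightarrow> (nat \<Rightarrow> nat \<Rightarrow> real) \<Rightarrow> (nat \<Rightarrow> nat \<Rightarrow> real) \<Rightarrow> (nat \<Rightarrow> nat \<Rightarrow> real) \<Rightarrow> 'a" where
  "hamiltonian n emb p q \<mu> \<kappa> \<gamma> =
     (\<Sum>i<n. \<Sum>j<n. emb (of_real (\<mu> i j / 2)) * p i * p j + emb (of_real (\<kappa> i j / 2)) * q i * q j
        + emb (of_real (\<gamma> i j / 2)) * p i * q j + emb (of_real (\<gamma> j i / 2)) * q i * p j)"

definition dirac_diagonalizable :: "nat \<Rightarrow> (complex \<Rightarrow> 'a::ring_1) \<Rightarrow> ('a \<Rightarrow> 'a) \<Rightarrow> (nat \<Rightarrow> 'a) \<Rightarrow> (nat \<Rightarrow> 'a) \<Rightarrow> 'a \<Rightarrow> bool" where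
  "dirac_diagonalizable n emb st p q H \<longleftrightarrow>
     (\<exists>(d :: nat \<Rightarrow> 'a) (\<omega> :: nat \<Rightarrow> real) (C :: real).
        (\<forall>i<n. \<exists>a b :: nat \<Rightarrow> complex. d i = (\<Sum>k<n. emb (a k) * p k + emb (b k) * q k)) \<and>
        (\<forall>i<n. \<forall>j<n. comm (d i) (st (d j)) = emb (if i = j then 1 else 0) \<and> comm (d i) (d j) = 0) \<and>
        H = (\<Sum>i<n. emb (of_real (\<omega> i)) * st (d i) * d i) + emb (of_real C))"

text \<open>M = [[mu, gamma],[gamma^T, kappa]] as a complex 2n x 2n matrix.\<close>
definition coeff_matrix :: "nat \<Rightarrow> (nat \<Rightarrow> nat \<Rightarrow> real) \<Rightarrow> (nat \<Rightarrow> nat \<Rightarrow> real) \<Rightarrow> (nat \<Rightarrow> nat \<Rightarrow> real) \<Rightarrow> complex mat" where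
  "coeff_matrix n \<mu> \<kappa> \<gamma> = mat (2*n) (2*n) (\<lambda>(r, s).
     of_real (if r < n \<and> s < n then \<mu> r s
      else if r < n then \<gamma> r (s - n)
      else if s < n then \<gamma> s (r - n)
      else \<kappa> (r - n) (s - n)))"

text \<open>Sigma_y = [[0, -i I],[i I, 0]].\<close>
definition sigma_y :: "nat \<Rightarrow> complex mat" where
  "sigma_y n = mat (2*n) (2*n) (\<lambda>(r, s).
     if r < n \<and> n \<le> s \<and> s - n = r then - \<i>
     else if n \<le> r \<and> s < n \<and> r - n = s then \<i> else 0)"

definition dynamic_matrix :: "nat \<Rightarrow> (nat \<Rightarrow> nat \<Rightarrow> real) \<Rightarrow> (nat \<Rightarrow> nat \<Rightarrow> real) \<Rightarrow> (nat \<Rightarrow> nat \<Rightarrow> real) \<Rightarrow> complex mat" where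
  "dynamic_matrix n \<mu> \<kappa> \<gamma> = sigma_y n * coeff_matrix n \<mu> \<kappa> \<gamma>"

definition phys_diagonalizable :: "complex mat \<Rightarrow> bool" where
  "phys_diagonalizable A \<longleftrightarrow>
     (\<exists>B. diagonal_mat B \<and> similar_mat A B) \<and> (\<forall>k. eigenvalue A k \<longrightarrow> k \<in> \<real>)"

end

theory Submission
  imports Defs
begin

text \<open>
  Write z = (p, q) and identify a vector w with the operator w \<bullet> z. The canonical commutation
  relations give [v \<bullet> z, w \<bullet> z] = v \<bullet> (\<Sigma>_y w), so w is recovered from w \<bullet> z, and
  [H, w \<bullet> z] = (M \<Sigma>_y w) \<bullet> z. The Dirac modes d_j and their adjoints are such operators with
  [H, d_j] = -\<omega>_j d_j and [H, d_j^\<dagger>] = \<omega>_j d_j^\<dagger>, so their 2n coefficient vectors are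
  eigenvectors of M \<Sigma>_y with real eigenvalues, and their commutation relations say that the
  matrix C formed by them satisfies C^T \<Sigma>_y C = i \<Sigma>_y. Hence C is invertible and \<Sigma>_y C
  diagonalizes D = \<Sigma>_y M, with the same real eigenvalues.
\<close>

lemma sum_split_halves:
  fixes f :: "nat \<Rightarrow> 'a::comm_monoid_add"
  shows "sum f {0..<2*n} = sum f {0..<n} + (\<Sum>k\<in>{0..<n}. f (k + n))"
  using sum.atLeastLessThan_concat[of 0 n "2*n" f] sum.shift_bounds_nat_ivl[of f 0 n n]
  by (simp add: mult_2)

lemma comm_add_left: "comm (a + b) x = comm a x + comm b x"
  unfolding comm_def by (simp add: algebra_simps)

lemma comm_sum_left: "comm (sum f A) x = (\<Sum>i\<in>A. comm (f i) x)"
  unfolding comm_def by (simp add: sum_distrib_left sum_distrib_right sum_subtractf)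

lemma comm_sum_right: "comm x (sum f A) = (\<Sum>i\<in>A. comm x (f i))"
  unfolding comm_def by (simp add: sum_distrib_left sum_distrib_right sum_subtractf)

lemma comm_mult_left: "comm (a * b) x = a * comm b x + comm a x * b"
  unfolding comm_def by (simp add: algebra_simps)

lemma comm_swap: "comm a b = - comm b a"
  unfolding comm_def by simp

lemma eigenvalue_mat_diag:
  fixes lam :: "nat \<Rightarrow> 'a::field"
  assumes "eigenvalue (mat_diag N lam) k"
  shows "\<exists>i<N. k = lam i"
proof -
  have "poly (\<Prod>a\<leftarrow>diag_mat (mat_diag N lam). [:- a, 1:]) k = 0"
    using assms by (simp add: eigenvalue_root_char_poly[of _ N]
        char_poly_upper_triangular[of _ N] upper_triangular_def mat_diag_def)
  then show ?thesis
    by (auto simp: poly_prod_list_zero_iff diag_mat_def mat_diag_def)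
qed

lemma phys_diagonalizable_if_eigenbasis:
  fixes A P Q :: "complex mat"
  assumes A: "A \<in> carrier_mat N N" and P: "P \<in> carrier_mat N N" and Q: "Q \<in> carrier_mat N N"
    and QP: "Q * P = 1\<^sub>m N" and AP: "A * P = P * mat_diag N lam"
    and real: "\<And>i. i < N \<Longrightarrow> lam i \<in> \<real>"
  shows "phys_diagonalizable A"
proof -
  have sim: "similar_mat A (mat_diag N lam)"
  proof (rule similar_matI)
    show PQ: "P * Q = 1\<^sub>m N" by (rule mat_mult_left_right_inverse[OF Q P QP])
    have "A = A * (P * Q)" using A by (simp add: PQ)
    also have "\<dots> = P * mat_diag N lam * Q"
      using A P Q by (simp add: AP assoc_mult_mat[of _ N N _ N _ N, symmetric])
    finally show "A = P * mat_diag N lam * Q" .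
  qed (use A P Q QP in auto)
  have "k \<in> \<real>" if "eigenvalue A k" for k
  proof -
    have "eigenvalue (mat_diag N lam) k"
      using that A char_poly_similar[OF sim]
      by (simp add: eigenvalue_root_char_poly[of _ N])
    then show ?thesis using eigenvalue_mat_diag real by blast
  qed
  moreover have "diagonal_mat (mat_diag N lam)"
    by (simp add: diagonal_mat_def mat_diag_def)
  ultimately show ?thesis
    unfolding phys_diagonalizable_def using sim by blast
qed

lemma phys_diagonalizable_if_symplectic_eigenvectors:
  fixes S A :: "complex mat" and c :: "nat \<Rightarrow> complex vec"
  assumes S: "S \<in> carrier_mat N N" and SS: "S * S = 1\<^sub>m N" and A: "A \<in> carrier_mat N N"
    and eig: "\<forall>a<N. c a \<in> carrier_vec N \<and> lam a \<in> \<real>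
      \<and> (A * S) *\<^sub>v c a = lam a \<cdot>\<^sub>v c a
      \<and> (\<forall>b<N. c a \<bullet> (S *\<^sub>v c b) = \<i> * S $$ (a, b))"
  shows "phys_diagonalizable (S * A)"
proof -
  define C where "C = mat N N (\<lambda>(r, m). c m $ r)"
  have C: "C \<in> carrier_mat N N" unfolding C_def by simp
  have col_C: "col C m = c m" if "m < N" for m
    using that eig unfolding C_def by (intro eq_vecI) auto
  have gram: "transpose_mat C * (S * C) = \<i> \<cdot>\<^sub>m S"
  proof (rule eq_matI)
    fix a b assume "a < dim_row (\<i> \<cdot>\<^sub>m S)" "b < dim_col (\<i> \<cdot>\<^sub>m S)"
    then have a: "a < N" and b: "b < N" using S by auto
    have "(transpose_mat C * (S * C)) $$ (a, b) = col C a \<bullet> col (S * C) b"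
      using S C a b by (subst index_mult_mat) (auto simp: row_transpose)
    also have "\<dots> = c a \<bullet> (S *\<^sub>v c b)"
      using col_mult2[OF S C b] a b by (simp add: col_C)
    also have "\<dots> = (\<i> \<cdot>\<^sub>m S) $$ (a, b)"
      using eig a b S by auto
    finally show "(transpose_mat C * (S * C)) $$ (a, b) = (\<i> \<cdot>\<^sub>m S) $$ (a, b)" .
  qed (use S C in auto)
  have eigen: "A * S * C = C * mat_diag N lam"
  proof (rule eq_matI)
    fix r m assume "r < dim_row (C * mat_diag N lam)" "m < dim_col (C * mat_diag N lam)"
    then have r: "r < N" and m: "m < N" using C by (auto simp: mat_diag_def)
    have "col (A * S * C) m = (A * S) *\<^sub>v c m"
      using col_mult2[of "A * S" N N C N m] A S C m by (simp add: col_C)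
    moreover have "(A * S * C) $$ (r, m) = col (A * S * C) m $ r"
      by (rule index_col[symmetric]) (use A S C r m in auto)
    ultimately have "(A * S * C) $$ (r, m) = ((A * S) *\<^sub>v c m) $ r"
      by simp
    then show "(A * S * C) $$ (r, m) = (C * mat_diag N lam) $$ (r, m)"
      unfolding mat_diag_mult_right[OF C] using eig r m by (auto simp: C_def mult.commute)
  qed (use A S C in \<open>auto simp: mat_diag_def\<close>)
  show ?thesis
  proof (rule phys_diagonalizable_if_eigenbasis[of _ N "S * C" "(- \<i>) \<cdot>\<^sub>m (S * transpose_mat C)"])
    have "(- \<i>) \<cdot>\<^sub>m (S * transpose_mat C) * (S * C) = (- \<i>) \<cdot>\<^sub>m (S * (transpose_mat C * (S * C)))"
    proof -
      have "S * transpose_mat C * (S * C) = S * (transpose_mat C * (S * C))"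
        using S C by (intro assoc_mult_mat[of _ N N _ N _ N]) auto
      then show ?thesis
        using S C by (subst mult_smult_assoc_mat[of _ N N _ N]) auto
    qed
    also have "\<dots> = (- \<i>) \<cdot>\<^sub>m (\<i> \<cdot>\<^sub>m 1\<^sub>m N)"
      using S by (simp add: gram SS mult_smult_distrib[of _ N N])
    also have "\<dots> = 1\<^sub>m N"
      by (rule eq_matI) auto
    finally show "(- \<i>) \<cdot>\<^sub>m (S * transpose_mat C) * (S * C) = 1\<^sub>m N" .
    have "S * A * (S * C) = S * (A * S * C)"
      using S A C by (simp add: assoc_mult_mat[of _ N N _ N _ N])
    also have "\<dots> = S * C * mat_diag N lam"
      using S C by (simp add: eigen assoc_mult_mat[of _ N N _ N _ N])
    finally show "S * A * (S * C) = S * C * mat_diag N lam" .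
    show "\<And>i. i < N \<Longrightarrow> lam i \<in> \<real>"
      using eig by blast
  qed (use S A C in auto)
qed

lemma coeff_matrix_carrier: "coeff_matrix n \<mu> \<kappa> \<gamma> \<in> carrier_mat (2*n) (2*n)"
  unfolding coeff_matrix_def by simp

lemma coeff_matrix_symmetric:
  assumes "\<forall>i<n. \<forall>j<n. \<mu> i j = \<mu> j i" "\<forall>i<n. \<forall>j<n. \<kappa> i j = \<kappa> j i"
  shows "transpose_mat (coeff_matrix n \<mu> \<kappa> \<gamma>) = coeff_matrix n \<mu> \<kappa> \<gamma>"
  using assms by (intro eq_matI) (auto simp: coeff_matrix_def)

lemma sigma_y_carrier: "sigma_y n \<in> carrier_mat (2*n) (2*n)"
  unfolding sigma_y_def by simp

lemma sigma_y_index: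
  assumes "r < 2*n" "s < 2*n"
  shows "sigma_y n $$ (r, s) =
    (if r < n then if s = r + n then - \<i> else 0 else if s = r - n then \<i> else 0)"
  using assms unfolding sigma_y_def by auto

lemma sigma_y_mult_vec_index:
  assumes "w \<in> carrier_vec (2*n)" "s < 2*n"
  shows "(sigma_y n *\<^sub>v w) $ s = (if s < n then - \<i> * w $ (s + n) else \<i> * w $ (s - n))"
proof -
  have "(sigma_y n *\<^sub>v w) $ s = (\<Sum>t\<in>{0..<2*n}. sigma_y n $$ (s, t) * w $ t)"
    using assms sigma_y_carrier[of n] by (simp add: scalar_prod_def)
  also have "\<dots> = (\<Sum>t\<in>{0..<2*n}. if t = (if s < n then s + n else s - n)
      then (if s < n then - \<i> else \<i>) * w $ t else 0)"
    using assms by (intro sum.cong) (auto simp: sigma_y_index)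
  finally show ?thesis using assms by auto
qed

lemma sigma_y_squared: "sigma_y n * sigma_y n = 1\<^sub>m (2*n)"
proof (rule eq_matI)
  fix r s assume "r < dim_row (1\<^sub>m (2*n))" "s < dim_col (1\<^sub>m (2*n))"
  then have r: "r < 2*n" and s: "s < 2*n" by auto
  have "(sigma_y n * sigma_y n) $$ (r, s) = (sigma_y n *\<^sub>v col (sigma_y n) s) $ r"
    using r s sigma_y_carrier[of n] by simp
  also have "\<dots> = 1\<^sub>m (2*n) $$ (r, s)"
    using r s sigma_y_carrier[of n]
    by (subst sigma_y_mult_vec_index) (auto simp: sigma_y_index)
  finally show "(sigma_y n * sigma_y n) $$ (r, s) = 1\<^sub>m (2*n) $$ (r, s)" .
qed (use sigma_y_carrier in auto)

lemma sigma_y_involutive: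
  assumes "w \<in> carrier_vec (2*n)"
  shows "sigma_y n *\<^sub>v (sigma_y n *\<^sub>v w) = w"
  using assms sigma_y_carrier[of n]
  by (simp add: sigma_y_squared flip: assoc_mult_mat_vec[of _ "2*n" "2*n" _ "2*n"])

locale star_alg =
  fixes emb :: "complex \<Rightarrow> 'a::ring_1" and st :: "'a \<Rightarrow> 'a"
  assumes star_algebra: "star_algebra emb st"
begin

lemma emb_add: "emb (x + y) = emb x + emb y"
  and emb_mult: "emb (x * y) = emb x * emb y"
  and emb_1: "emb 1 = 1"
  and emb_central: "emb c * a = a * emb c"
  and st_add: "st (a + b) = st a + st b"
  and st_mult: "st (a * b) = st b * st a"
  and st_emb: "st (emb c) = emb (cnj c)"
  using star_algebra unfolding star_algebra_def by blast+

sublocale emb: inj_ring_hom emb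
proof
  show "emb 0 = 0" using emb_add[of 0 0] by simp
  show "x = 0" if "emb x = 0" for x
  proof (rule ccontr)
    assume "x \<noteq> 0"
    then have "emb x * emb (inverse x) = 1"
      by (metis emb_1 emb_mult right_inverse)
    with \<open>emb x = 0\<close> show False by simp
  qed
qed (simp_all add: emb_add emb_mult emb_1)

sublocale st: ab_group_add_hom st
proof
  show "st 0 = 0" using st_add[of 0 0] by simp
qed (simp add: st_add)

lemma comm_emb_left: "comm (emb c * a) x = emb c * comm a x"
  and comm_emb_right: "comm x (emb c * a) = emb c * comm x a"
proof -
  have "x * (emb c * a) = emb c * (x * a)"
    by (metis emb_central mult.assoc)
  then show "comm (emb c * a) x = emb c * comm a x" "comm x (emb c * a) = emb c * comm x a"
    unfolding comm_def by (simp_all add: right_diff_distrib mult.assoc)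
qed

lemma comm_emb: "comm (emb c) x = 0"
  unfolding comm_def by (simp add: emb_central)

lemma st_comm: "st (comm a b) = comm (st b) (st a)"
  unfolding comm_def by (simp add: st.hom_minus st_mult)

definition bosonic_modes :: "nat \<Rightarrow> (nat \<Rightarrow> 'a) \<Rightarrow> bool" where
  "bosonic_modes n d \<longleftrightarrow>
     (\<forall>i<n. \<forall>j<n. comm (d i) (st (d j)) = emb (if i = j then 1 else 0) \<and> comm (d i) (d j) = 0)"

definition ladder :: "nat \<Rightarrow> (nat \<Rightarrow> 'a) \<Rightarrow> nat \<Rightarrow> 'a" where
  "ladder n d m = (if m < n then d m else st (d (m - n)))"

lemma comm_ladder:
  assumes rel: "bosonic_modes n d"
    and a: "a < 2*n" and b: "b < 2*n"
  shows "comm (ladder n d a) (ladder n d b) = emb (\<i> * sigma_y n $$ (a, b))"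
proof -
  consider "a < n" "b < n" | "a < n" "n \<le> b" | "n \<le> a" "b < n" | "n \<le> a" "n \<le> b"
    by linarith
  then show ?thesis
  proof cases
    case 3
    have "comm (st (d (a - n))) (d b) = - comm (d b) (st (d (a - n)))"
      by (rule comm_swap)
    with 3 a b rel show ?thesis
      by (auto simp: ladder_def sigma_y_index bosonic_modes_def emb.hom_uminus)
  next
    case 4
    have "comm (st (d (a - n))) (st (d (b - n))) = st (comm (d (b - n)) (d (a - n)))"
      by (simp add: st_comm)
    with 4 a b rel show ?thesis
      by (auto simp: ladder_def sigma_y_index bosonic_modes_def)
  qed (use a b rel in \<open>auto simp: ladder_def sigma_y_index bosonic_modes_def\<close>)
qed

lemma comm_number_form_ladder:
  assumes rel: "bosonic_modes n d"
    and H: "H = (\<Sum>i<n. emb (of_real (\<omega> i)) * st (d i) * d i) + emb c"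
    and m: "m < 2*n"
  shows "comm H (ladder n d m) = emb (if m < n then - of_real (\<omega> m) else of_real (\<omega> (m - n))) * ladder n d m"
proof -
  let ?e = "ladder n d"
  let ?k = "if m < n then m else m - n"
  let ?w = "if m < n then - of_real (\<omega> m) else of_real (\<omega> (m - n))"
  have "comm (emb (of_real (\<omega> i)) * st (d i) * d i) (?e m) = (if i = ?k then emb ?w * ?e m else 0)"
    if i: "i < n" for i
  proof -
    have e: "st (d i) = ?e (i + n)" "d i = ?e i" using i by (simp_all add: ladder_def)
    have "comm (emb (of_real (\<omega> i)) * st (d i) * d i) (?e m) =
        emb (of_real (\<omega> i)) * (?e (i + n) * comm (?e i) (?e m) + comm (?e (i + n)) (?e m) * ?e i)"
      unfolding e(1) unfolding e(2) by (simp add: mult.assoc comm_emb_left comm_mult_left comm_emb)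
    also have "\<dots> = emb (of_real (\<omega> i)) * (?e (i + n) * emb (\<i> * sigma_y n $$ (i, m))
        + emb (\<i> * sigma_y n $$ (i + n, m)) * ?e i)"
      using i m by (simp add: comm_ladder[OF rel])
    finally show ?thesis
      using i m by (auto simp: sigma_y_index ladder_def emb.hom_uminus)
  qed
  then show ?thesis
    using m unfolding H comm_add_left comm_emb comm_sum_left by auto
qed

end

locale canonical_pairs = star_alg emb st
  for emb :: "complex \<Rightarrow> 'a::ring_1" and st +
  fixes n :: nat and p q :: "nat \<Rightarrow> 'a"
  assumes ccr: "ccr n emb st p q"
begin

definition z :: "nat \<Rightarrow> 'a" where
  "z r = (if r < n then p r else q (r - n))"

definition lin :: "complex vec \<Rightarrow> 'a" where
  "lin w = (\<Sum>r\<in>{0..<2*n}. emb (w $ r) * z r)"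

lemma z_selfadjoint: "r < 2*n \<Longrightarrow> st (z r) = z r"
  using ccr unfolding ccr_def z_def by auto

lemma comm_z_z:
  assumes r: "r < 2*n" and s: "s < 2*n"
  shows "comm (z r) (z s) = emb (sigma_y n $$ (r, s))"
proof -
  have pq: "comm (p i) (q j) = emb (- \<i> * (if i = j then 1 else 0))"
    and pp: "comm (p i) (p j) = 0" and qq: "comm (q i) (q j) = 0" if "i < n" "j < n" for i j
    using ccr that unfolding ccr_def by blast+
  consider "r < n" "s < n" | "r < n" "n \<le> s" | "n \<le> r" "s < n" | "n \<le> r" "n \<le> s"
    by linarith
  then show ?thesis
  proof cases
    case 3
    then have "comm (q (r - n)) (p s) = - comm (p s) (q (r - n))"
      by (rule_tac comm_swap)
    with 3 r s pq show ?thesis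
      by (auto simp: z_def sigma_y_index emb.hom_uminus)
  qed (use r s pq pp qq in \<open>auto simp: z_def sigma_y_index\<close>)
qed

lemma comm_z_lin:
  assumes s: "s < 2*n" and w: "w \<in> carrier_vec (2*n)"
  shows "comm (z s) (lin w) = emb ((sigma_y n *\<^sub>v w) $ s)"
proof -
  have "comm (z s) (lin w) = (\<Sum>t\<in>{0..<2*n}. emb (sigma_y n $$ (s, t) * w $ t))"
    unfolding lin_def comm_sum_right comm_emb_right
  proof (rule sum.cong)
    fix t assume "t \<in> {0..<2*n}"
    then show "emb (w $ t) * comm (z s) (z t) = emb (sigma_y n $$ (s, t) * w $ t)"
      using s by (simp add: comm_z_z emb.hom_mult mult.commute)
  qed simp
  also have "\<dots> = emb ((sigma_y n *\<^sub>v w) $ s)"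
    using s w sigma_y_carrier[of n] by (simp add: emb.hom_sum scalar_prod_def)
  finally show ?thesis .
qed

lemma comm_lin_lin:
  assumes v: "v \<in> carrier_vec (2*n)" and w: "w \<in> carrier_vec (2*n)"
  shows "comm (lin v) (lin w) = emb (v \<bullet> (sigma_y n *\<^sub>v w))"
proof -
  have "comm (lin v) (lin w) = (\<Sum>r\<in>{0..<2*n}. emb (v $ r * (sigma_y n *\<^sub>v w) $ r))"
    unfolding lin_def[of v] comm_sum_left comm_emb_left
    using w by (intro sum.cong) (simp_all add: comm_z_lin emb.hom_mult)
  also have "\<dots> = emb (v \<bullet> (sigma_y n *\<^sub>v w))"
    using sigma_y_carrier[of n] by (simp only: scalar_prod_def emb.hom_sum dim_mult_mat_vec carrier_matD)
  finally show ?thesis .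
qed

lemma st_lin:
  assumes "w \<in> carrier_vec (2*n)"
  shows "st (lin w) = lin (conjugate w)"
  unfolding lin_def st.hom_sum
  using assms by (intro sum.cong) (simp_all add: st_mult st_emb z_selfadjoint flip: emb_central)

lemma emb_mult_lin:
  assumes "w \<in> carrier_vec (2*n)"
  shows "emb c * lin w = lin (c \<cdot>\<^sub>v w)"
  unfolding lin_def sum_distrib_left
  using assms by (intro sum.cong) (simp_all add: emb.hom_mult mult.assoc)

lemma lin_inj:
  assumes v: "v \<in> carrier_vec (2*n)" and w: "w \<in> carrier_vec (2*n)" and eq: "lin v = lin w"
  shows "v = w"
proof -
  have "sigma_y n *\<^sub>v v = sigma_y n *\<^sub>v w"
  proof (rule eq_vecI)
    fix s assume "s < dim_vec (sigma_y n *\<^sub>v w)"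
    then have s: "s < 2*n" using sigma_y_carrier[of n] by simp
    show "(sigma_y n *\<^sub>v v) $ s = (sigma_y n *\<^sub>v w) $ s"
      using comm_z_lin[OF s v] comm_z_lin[OF s w] eq by simp
  qed simp
  then show ?thesis
    by (metis sigma_y_involutive v w)
qed

lemma sum_p_q_eq_lin:
  "(\<Sum>k<n. emb (a k) * p k + emb (b k) * q k) = lin (vec (2*n) (\<lambda>r. if r < n then a r else b (r - n)))"
  unfolding lin_def sum_split_halves by (simp add: sum.distrib z_def lessThan_atLeast0)

definition quad_form :: "complex mat \<Rightarrow> 'a" where
  "quad_form A = (\<Sum>r\<in>{0..<2*n}. \<Sum>s\<in>{0..<2*n}. emb (A $$ (r, s) / 2) * z r * z s)"

lemma hamiltonian_eq_quad_form:
  "hamiltonian n emb p q \<mu> \<kappa> \<gamma> = quad_form (coeff_matrix n \<mu> \<kappa> \<gamma>)"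
  unfolding hamiltonian_def quad_form_def sum_split_halves
  by (simp add: sum.distrib z_def coeff_matrix_def lessThan_atLeast0 ac_simps)

lemma comm_quad_form_lin:
  assumes A: "A \<in> carrier_mat (2*n) (2*n)" and sym: "transpose_mat A = A"
    and w: "w \<in> carrier_vec (2*n)"
  shows "comm (quad_form A) (lin w) = lin ((A * sigma_y n) *\<^sub>v w)"
proof -
  define u where "u = sigma_y n *\<^sub>v w"
  have u: "u \<in> carrier_vec (2*n)"
    unfolding u_def using sigma_y_carrier[of n] w by simp
  have Asym: "A $$ (s, r) = A $$ (r, s)" if "r < 2*n" "s < 2*n" for r s
    using that A by (metis carrier_matD index_transpose_mat(1) sym)
  define T where "T r s = emb (A $$ (r, s) / 2 * u $ s) * z r" for r s
  have "comm (emb (A $$ (r, s) / 2) * z r * z s) (lin w) = T r s + T s r"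
    if "r < 2*n" "s < 2*n" for r s
  proof -
    have "comm (z r * z s) (lin w) = z r * emb (u $ s) + emb (u $ r) * z s"
      using that w by (simp add: comm_mult_left comm_z_lin u_def)
    also have "\<dots> = emb (u $ s) * z r + emb (u $ r) * z s"
      by (simp add: emb_central)
    finally have "comm (emb (A $$ (r, s) / 2) * z r * z s) (lin w) =
        emb (A $$ (r, s) / 2) * (emb (u $ s) * z r + emb (u $ r) * z s)"
      by (simp add: mult.assoc comm_emb_left)
    then show ?thesis
      using that by (simp add: T_def distrib_left Asym flip: mult.assoc emb.hom_mult)
  qed
  then have "comm (quad_form A) (lin w) =
      (\<Sum>r\<in>{0..<2*n}. \<Sum>s\<in>{0..<2*n}. T r s) + (\<Sum>r\<in>{0..<2*n}. \<Sum>s\<in>{0..<2*n}. T s r)"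
    unfolding quad_form_def comm_sum_left by (simp add: sum.distrib)
  also have "(\<Sum>r\<in>{0..<2*n}. \<Sum>s\<in>{0..<2*n}. T s r) = (\<Sum>r\<in>{0..<2*n}. \<Sum>s\<in>{0..<2*n}. T r s)"
    by (rule sum.swap)
  also have "(\<Sum>r\<in>{0..<2*n}. \<Sum>s\<in>{0..<2*n}. T r s) + (\<Sum>r\<in>{0..<2*n}. \<Sum>s\<in>{0..<2*n}. T r s)
      = lin (A *\<^sub>v u)"
    unfolding lin_def T_def
    using A u by (simp add: scalar_prod_def emb.hom_sum sum_distrib_right mult.commute
        flip: sum.distrib distrib_right emb.hom_add)
  finally show ?thesis
    unfolding u_def using A w sigma_y_carrier[of n] by simp
qed

lemma symplectic_eigenvectors_if_dirac_diagonalizable: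
  assumes A: "A \<in> carrier_mat (2*n) (2*n)" and sym: "transpose_mat A = A"
    and dd: "dirac_diagonalizable n emb st p q (quad_form A)"
  shows "\<exists>c lam. \<forall>a<2*n. c a \<in> carrier_vec (2*n) \<and> lam a \<in> \<real>
    \<and> (A * sigma_y n) *\<^sub>v c a = lam a \<cdot>\<^sub>v c a
    \<and> (\<forall>b<2*n. c a \<bullet> (sigma_y n *\<^sub>v c b) = \<i> * sigma_y n $$ (a, b))"
proof -
  obtain d \<omega> C where
    d_lin: "\<forall>i<n. \<exists>a b. d i = (\<Sum>k<n. emb (a k) * p k + emb (b k) * q k)" and
    rel: "bosonic_modes n d" and
    H: "quad_form A = (\<Sum>i<n. emb (of_real (\<omega> i)) * st (d i) * d i) + emb (of_real C)"
    using dd unfolding dirac_diagonalizable_def bosonic_modes_def by blast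
  have "\<forall>i<n. \<exists>v. v \<in> carrier_vec (2*n) \<and> d i = lin v"
  proof (intro allI impI)
    fix i assume "i < n"
    with d_lin obtain a b where "d i = (\<Sum>k<n. emb (a k) * p k + emb (b k) * q k)" by blast
    then show "\<exists>v. v \<in> carrier_vec (2*n) \<and> d i = lin v"
      unfolding sum_p_q_eq_lin by (blast intro: vec_carrier)
  qed
  then obtain v where v: "\<And>i. i < n \<Longrightarrow> v i \<in> carrier_vec (2*n) \<and> d i = lin (v i)"
    by metis
  define c where "c m = (if m < n then v m else conjugate (v (m - n)))" for m
  define lam :: "nat \<Rightarrow> complex"
    where "lam m = (if m < n then - of_real (\<omega> m) else of_real (\<omega> (m - n)))" for m
  have c: "c m \<in> carrier_vec (2*n)" and ladder_c: "ladder n d m = lin (c m)" if "m < 2*n" for m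
    using that v[of m] v[of "m - n"] by (auto simp: c_def ladder_def st_lin)
  have "(A * sigma_y n) *\<^sub>v c a = lam a \<cdot>\<^sub>v c a" if a: "a < 2*n" for a
  proof (rule lin_inj)
    have "lin ((A * sigma_y n) *\<^sub>v c a) = comm (quad_form A) (ladder n d a)"
      using a A sym by (simp add: comm_quad_form_lin c ladder_c)
    also have "\<dots> = emb (lam a) * ladder n d a"
      unfolding lam_def by (rule comm_number_form_ladder[OF rel H a])
    also have "\<dots> = lin (lam a \<cdot>\<^sub>v c a)"
      using a by (simp add: ladder_c c emb_mult_lin)
    finally show "lin ((A * sigma_y n) *\<^sub>v c a) = lin (lam a \<cdot>\<^sub>v c a)" .
  qed (use a A c sigma_y_carrier[of n] in auto)
  moreover have "c a \<bullet> (sigma_y n *\<^sub>v c b) = \<i> * sigma_y n $$ (a, b)"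
    if "a < 2*n" "b < 2*n" for a b
    using comm_ladder[OF rel that] that by (simp add: ladder_c comm_lin_lin c)
  moreover have "lam a \<in> \<real>" for a
    by (simp add: lam_def)
  ultimately show ?thesis
    using c by blast
qed

end

theorem proposition8:
  fixes emb :: "complex \<Rightarrow> 'a::ring_1" and st :: "'a \<Rightarrow> 'a"
    and p q :: "nat \<Rightarrow> 'a" and \<mu> \<kappa> \<gamma> :: "nat \<Rightarrow> nat \<Rightarrow> real" and n :: nat
  assumes "star_algebra emb st"
    and "ccr n emb st p q"
    and "\<forall>i<n. \<forall>j<n. \<mu> i j = \<mu> j i"
    and "\<forall>i<n. \<forall>j<n. \<kappa> i j = \<kappa> j i"
    and "dirac_diagonalizable n emb st p q (hamiltonian n emb p q \<mu> \<kappa> \<gamma>)"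
  shows "phys_diagonalizable (dynamic_matrix n \<mu> \<kappa> \<gamma>)"
proof -
  interpret canonical_pairs emb st n p q
    using assms(1,2) by unfold_locales
  have sym: "transpose_mat (coeff_matrix n \<mu> \<kappa> \<gamma>) = coeff_matrix n \<mu> \<kappa> \<gamma>"
    using assms(3,4) by (rule coeff_matrix_symmetric)
  have "dirac_diagonalizable n emb st p q (quad_form (coeff_matrix n \<mu> \<kappa> \<gamma>))"
    using assms(5) by (simp only: hamiltonian_eq_quad_form)
  then obtain c lam where "\<forall>a<2*n. c a \<in> carrier_vec (2*n) \<and> lam a \<in> \<real>
      \<and> (coeff_matrix n \<mu> \<kappa> \<gamma> * sigma_y n) *\<^sub>v c a = lam a \<cdot>\<^sub>v c a
      \<and> (\<forall>b<2*n. c a \<bullet> (sigma_y n *\<^sub>v c b) = \<i> * sigma_y n $$ (a, b))"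
    using symplectic_eigenvectors_if_dirac_diagonalizable[OF coeff_matrix_carrier sym] by blast
  then show ?thesis
    unfolding dynamic_matrix_def
    by (rule phys_diagonalizable_if_symplectic_eigenvectors[OF sigma_y_carrier sigma_y_squared coeff_matrix_carrier])
qed

end
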